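(* Let $\mathbf{k}=\mathbb{R}$ or $\mathbf{k}=\mathbb{C}$ and $n\geq2$. There exists a map $\rho\colon[-1,1]\to\mathrm{Bir}(\mathbb{P}^n_{\mathbf{k}})$, continuous for the Euclidean topologies, such that for arbitrarily small $\varepsilon>0$ and any $d\geq1$ there is no continuous map $\rho_\varepsilon\colon(-\varepsilon,\varepsilon)\to H_d(\mathbf{k})$ with $\rho|_{(-\varepsilon,\varepsilon)}=\pi_d\circ\rho_\varepsilon$.
   Context: For $d\geq1$, $W_d(\mathbf{k})$ is the projective space of classes $[h_0:\dots:h_n]$ of non-zero $(n+1)$-tuples of homogeneous polynomials of degree $d$ in $\mathbf{k}[x_0,\dots,x_n]$ modulo scalars, with its Euclidean topology; $H_d(\mathbf{k})\subset W_d(\mathbf{k})$ (subspace topology) is the set of $h$ such that $\psi_h\colon[x]\dashrightarrow[h_0(x):\dots:h_n(x)]$ is birational; $\pi_d\colon H_d(\mathbf{k})\to\mathrm{Bir}(\mathbb{P}^n_{\mathbf{k}})$, $h\mapsto\psi_h$, with image $\mathrm{Bir}(\mathbb{P}^n_{\mathbf{k}})_{\leq d}$ (maps of degree $\leq d$). The Euclidean topology on $\mathrm{Bir}(\mathbb{P}^n_{\mathbf{k}})_{\leq d}$ is the quotient topology via $\pi_d$, and on $\mathrm{Bir}(\mathbb{P}^n_{\mathbf{k}})$ the inductive limit topology of the $\mathrm{Bir}(\mathbb{P}^n_{\mathbf{k}})_{\leq d}$. *)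

theory Defs
  imports "HOL-Analysis.Analysis"
begin

text \<open>Homogeneous polynomials in x_0..x_n of degree d are encoded by their coefficients.
An (n+1)-tuple (h_0,...,h_n) is a coefficient function c, where c (i, a) is the coefficient
of the monomial prod_j x_j^(a j) in h_i.  Such c with finite support form a finite-dimensional
k-vector space; its Euclidean topology is the (product) topology on functions.\<close>

type_synonym 'k coeffs = "nat \<times> (nat \<Rightarrow> nat) \<Rightarrow> 'k"

definition Mon :: "nat \<Rightarrow> nat \<Rightarrow> (nat \<Rightarrow> nat) set" where
  "Mon n d = {a. (\<forall>j>n. a j = 0) \<and> (\<Sum>j\<le>n. a j) = d}"

definition Vd :: "nat \<Rightarrow> nat \<Rightarrow> ('k::real_normed_field) coeffs set" where
  "Vd n d = {c. c \<noteq> (\<lambda>_. 0) \<and> (\<forall>i a. c (i, a) \<noteq> 0 \<longrightarrow> i \<le> n \<and> a \<in> Mon n d)}"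

definition polyfun :: "nat \<Rightarrow> nat \<Rightarrow> ('k::real_normed_field) coeffs \<Rightarrow> nat \<Rightarrow> (nat \<Rightarrow> 'k) \<Rightarrow> 'k" where
  "polyfun n d c i x = (\<Sum>a\<in>Mon n d. c (i, a) * (\<Prod>j\<le>n. x j ^ a j))"

definition hmap :: "nat \<Rightarrow> nat \<Rightarrow> ('k::real_normed_field) coeffs \<Rightarrow> (nat \<Rightarrow> 'k) \<Rightarrow> (nat \<Rightarrow> 'k)" where
  "hmap n d c x = (\<lambda>i. if i \<le> n then polyfun n d c i x else 0)"

text \<open>psi_g o psi_h is defined and equals the identity as a rational map:
g(h(x)) is not identically zero and is proportional to x.\<close>
definition comp_is_id :: "nat \<Rightarrow> nat \<Rightarrow> ('k::real_normed_field) coeffs \<Rightarrow> nat \<Rightarrow> 'k coeffs \<Rightarrow> bool" where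
  "comp_is_id n e g d h \<longleftrightarrow>
     (\<exists>x. \<exists>i\<le>n. polyfun n e g i (hmap n d h x) \<noteq> 0) \<and>
     (\<forall>x. \<forall>i\<le>n. \<forall>j\<le>n. polyfun n e g i (hmap n d h x) * x j = polyfun n e g j (hmap n d h x) * x i)"

definition birational :: "nat \<Rightarrow> nat \<Rightarrow> ('k::real_normed_field) coeffs \<Rightarrow> bool" where
  "birational n d h \<longleftrightarrow> h \<in> Vd n d \<and>
     (\<exists>e\<ge>1. \<exists>g\<in>Vd n e. comp_is_id n e g d h \<and> comp_is_id n d h e g)"

definition same_map :: "nat \<Rightarrow> nat \<Rightarrow> ('k::real_normed_field) coeffs \<Rightarrow> nat \<Rightarrow> 'k coeffs \<Rightarrow> bool" where
  "same_map n d h e g \<longleftrightarrow>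
     (\<forall>x. \<forall>i\<le>n. \<forall>j\<le>n. polyfun n d h i x * polyfun n e g j x = polyfun n d h j x * polyfun n e g i x)"

text \<open>An element of Bir(P^n): the set of all birational representatives (of any degree) of the map.\<close>
type_synonym 'k bir = "(nat \<times> 'k coeffs) set"

definition psi :: "nat \<Rightarrow> nat \<Rightarrow> ('k::real_normed_field) coeffs \<Rightarrow> 'k bir" where
  "psi n d h = {(e, g). e \<ge> 1 \<and> birational n e g \<and> same_map n d h e g}"

definition quotient_top :: "'a topology \<Rightarrow> ('a \<Rightarrow> 'b) \<Rightarrow> 'b topology" where
  "quotient_top X f = topology (\<lambda>U. U \<subseteq> f ` topspace X \<and> openin X {x \<in> topspace X. f x \<in> U})"

definition proj_class :: "('k::real_normed_field) coeffs \<Rightarrow> 'k coeffs set" where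
  "proj_class c = {(\<lambda>p. s * c p) | s. s \<noteq> 0}"

definition W :: "nat \<Rightarrow> nat \<Rightarrow> ('k::real_normed_field) coeffs set set" where
  "W n d = proj_class ` Vd n d"

definition Wtop :: "nat \<Rightarrow> nat \<Rightarrow> ('k::real_normed_field) coeffs set topology" where
  "Wtop n d = quotient_top (subtopology euclidean (Vd n d)) proj_class"

definition H :: "nat \<Rightarrow> nat \<Rightarrow> ('k::real_normed_field) coeffs set set" where
  "H n d = {w \<in> W n d. \<exists>h\<in>w. birational n d h}"

definition Htop :: "nat \<Rightarrow> nat \<Rightarrow> ('k::real_normed_field) coeffs set topology" where
  "Htop n d = subtopology (Wtop n d) (H n d)"

definition pi :: "nat \<Rightarrow> nat \<Rightarrow> ('k::real_normed_field) coeffs set \<Rightarrow> 'k bir" where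
  "pi n d w = psi n d (SOME h. h \<in> w)"

definition Bir_le :: "nat \<Rightarrow> nat \<Rightarrow> ('k::real_normed_field) bir set" where
  "Bir_le n d = pi n d ` H n d"

definition Bir_le_top :: "nat \<Rightarrow> nat \<Rightarrow> ('k::real_normed_field) bir topology" where
  "Bir_le_top n d = quotient_top (Htop n d) (pi n d)"

definition Bir :: "nat \<Rightarrow> ('k::real_normed_field) bir set" where
  "Bir n = (\<Union>d\<in>{1..}. Bir_le n d)"

definition BirTop :: "nat \<Rightarrow> ('k::real_normed_field) bir topology" where
  "BirTop n = topology (\<lambda>U. U \<subseteq> Bir n \<and> (\<forall>d\<ge>1. openin (Bir_le_top n d) (U \<inter> Bir_le n d)))"

end

theory Submission
  imports Defs "HOL-Complex_Analysis.Complex_Analysis"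
begin

text \<open>
  For a^2 + b^2 = 1 and real s let L = a x_0 + b x_1 and
  G(a, b, s) = [x_0 L : x_1 L : x_2 L + s (x_0^2 + x_1^2) : x_3 L : ... : x_n L].
  As L(G(a, b, s) x) = L(x)^2, one gets G(a, b, -s) (G(a, b, s) x) = L(x)^3 x, so every G(a, b, s) is
  birational, and every G(a, b, 0) is the identity. The path \<rho>(t) = G(cos (1/t), sin (1/t), t),
  \<rho>(0) = id, is continuous: its parameters spiral onto the circle s = 0, which the continuous map
  (a, b, s) \<mapsto> G(a, b, s) collapses to the single point id.

  Suppose \<rho> lifts continuously to H_d near 0, and let h be the representative of the lift at 0.
  A point y with y_1 \<noteq> 0 and y_0/y_1 real lies on the hyperplane L = 0 of G(cos (1/t), sin (1/t), t) for
  arbitrarily small t > 0; there this map is [0 : 0 : t (y_0^2 + y_1^2) : 0 : ... : 0], so the 0-th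
  component of each of its representatives vanishes at y. Non-vanishing at y being an open
  condition on H_d, also h_0(y) = 0. Hence h_0 vanishes wherever x_0/x_1 is real, so (over \<complex> by the
  identity theorem) everywhere; as h is proportional to the identity, h = 0, which is not birational.
\<close>

section \<open>Polynomial tuples\<close>

lemma finite_Mon: "finite (Mon n d)"
proof (rule finite_subset)
  show "Mon n d \<subseteq> {a. \<forall>j. (j \<in> {0..n} \<longrightarrow> a j \<in> {0..d}) \<and> (j \<notin> {0..n} \<longrightarrow> a j = 0)}"
    by (auto simp: Mon_def intro: order.trans[OF member_le_sum[of _ "{..n}"]])
  show "finite \<dots>"
    using finite_set_of_finite_funs[of "{0..n}" "{0..d}" 0] by simp
qed

lemma polyfun_add: "polyfun n d (\<lambda>p. c p + c' p) i x = polyfun n d c i x + polyfun n d c' i x"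
  by (simp add: polyfun_def sum.distrib distrib_right)

lemma polyfun_scale: "polyfun n d (\<lambda>p. s * c p) i x = s * polyfun n d c i x"
  by (simp add: polyfun_def sum_distrib_left mult.assoc)

lemma polyfun_sum: "polyfun n d (\<lambda>p. \<Sum>l\<in>L. c l p) i x = (\<Sum>l\<in>L. polyfun n d (c l) i x)"
  by (simp add: polyfun_def sum_distrib_right sum.swap[of _ "Mon n d"])

lemma polyfun_zero_coeffs: "polyfun n d (\<lambda>_. 0) i x = 0"
  by (simp add: polyfun_def)

lemma polyfun_at_origin:
  assumes "d \<ge> 1" shows "polyfun n d c i (\<lambda>_. 0) = 0"
proof -
  have "\<exists>j\<le>n. a j \<noteq> 0" if "a \<in> Mon n d" for a
  proof (rule ccontr)
    assume "\<not> (\<exists>j\<le>n. a j \<noteq> 0)"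
    then have "(\<Sum>j\<le>n. a j) = 0" by simp
    with that assms show False by (simp add: Mon_def)
  qed
  then show ?thesis
    unfolding polyfun_def by (intro sum.neutral) (auto simp: prod_zero)
qed

lemma continuous_on_polyfun: "continuous_on UNIV (polyfun n d c i)"
  unfolding polyfun_def by (intro continuous_intros continuous_on_product_coordinates)

lemma continuous_on_polyfun_coeffs: "continuous_on UNIV (\<lambda>c. polyfun n d c i x)"
  unfolding polyfun_def by (intro continuous_intros continuous_on_product_coordinates)

lemma vanishes_if_vanishes_off_hyperplane:
  fixes f L :: "(nat \<Rightarrow> 'k::real_normed_field) \<Rightarrow> 'k"
  assumes f: "continuous_on UNIV f"
    and L: "\<And>x t. L (\<lambda>k. x k + of_real t * v k) = L x + of_real t"
    and off: "\<And>y. L y \<noteq> 0 \<Longrightarrow> f y = 0"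
  shows "f x = 0"
proof (cases "L x = 0")
  case False
  then show ?thesis by (rule off)
next
  case True
  let ?line = "\<lambda>t::real. \<lambda>k. x k + of_real t * v k"
  have "continuous_on UNIV ?line"
    by (intro continuous_on_coordinatewise_then_product continuous_intros)
  then have "isCont ?line 0"
    by (simp add: continuous_on_eq_continuous_at)
  then have "(?line \<longlongrightarrow> x) (at 0)"
    by (simp add: isCont_def)
  moreover have "\<forall>\<^sub>F t in at 0. ?line t \<in> {y. f y = 0}"
    using True by (intro always_eventually eventually_at_filter[THEN iffD2]) (simp add: L off)
  ultimately have "x \<in> {y. f y = 0}"
    by (intro Lim_in_closed_set closed_Collect_eq f continuous_on_const) auto
  then show ?thesis by simp
qed

definition unit_coeffs :: "nat \<Rightarrow> (nat \<Rightarrow> nat) \<Rightarrow> 'k::real_normed_field coeffs" where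
  "unit_coeffs i a = (\<lambda>p. if p = (i, a) then 1 else 0)"

definition quad_exp :: "nat \<Rightarrow> nat \<Rightarrow> nat \<Rightarrow> nat" where
  "quad_exp j l = (\<lambda>k. of_bool (k = j) + of_bool (k = l))"

lemma polyfun_unit_coeffs:
  "polyfun n d (unit_coeffs j a) i x = (if i = j \<and> a \<in> Mon n d then \<Prod>k\<le>n. x k ^ a k else 0)"
  by (cases "i = j") (simp_all add: polyfun_def unit_coeffs_def finite_Mon
      if_distrib[of "\<lambda>u. u * _"] cong: if_cong)

lemma quad_exp_Mon: "j \<le> n \<Longrightarrow> l \<le> n \<Longrightarrow> quad_exp j l \<in> Mon n 2"
  by (simp add: Mon_def quad_exp_def sum.distrib)

lemma prod_power_of_bool:
  assumes "j \<le> (n::nat)" shows "(\<Prod>k\<le>n. (x k :: 'a::comm_monoid_mult) ^ of_bool (k = j)) = x j"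
proof -
  have "(\<Prod>k\<le>n. x k ^ of_bool (k = j)) = (\<Prod>k\<le>n. if k = j then x k else 1)"
    by (intro prod.cong) auto
  also have "\<dots> = x j"
    using assms by simp
  finally show ?thesis .
qed

lemma polyfun_unit_quad:
  "i \<le> n \<Longrightarrow> j \<le> n \<Longrightarrow> l \<le> n \<Longrightarrow>
     polyfun n 2 (unit_coeffs m (quad_exp j l)) i x = (if i = m then x j * x l else 0)"
  by (simp add: polyfun_unit_coeffs quad_exp_Mon)
    (simp add: quad_exp_def power_add prod.distrib prod_power_of_bool)

section \<open>The quadratic birational maps G\<close>

definition lin_coeffs :: "nat \<Rightarrow> nat \<Rightarrow> 'k::real_normed_field coeffs" where
  "lin_coeffs n j = (\<lambda>p. \<Sum>i\<le>n. unit_coeffs i (quad_exp j i) p)"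

text \<open>The coefficients of G(a, b, s); \<open>lin_coeffs n j\<close> are those of x \<mapsto> x_j x.\<close>

definition G_coeffs :: "nat \<Rightarrow> real \<Rightarrow> real \<Rightarrow> real \<Rightarrow> 'k::real_normed_field coeffs" where
  "G_coeffs n a b s = (\<lambda>p. of_real a * lin_coeffs n 0 p + of_real b * lin_coeffs n 1 p
     + of_real s * (unit_coeffs 2 (quad_exp 0 0) p + unit_coeffs 2 (quad_exp 1 1) p))"

definition lin_form :: "real \<Rightarrow> real \<Rightarrow> (nat \<Rightarrow> 'k::real_normed_field) \<Rightarrow> 'k" where
  "lin_form a b x = of_real a * x 0 + of_real b * x 1"

definition circle_point :: "real \<Rightarrow> real \<Rightarrow> nat \<Rightarrow> 'k::real_normed_field" where
  "circle_point a b = (\<lambda>j. if j = 0 then of_real a else if j = 1 then of_real b else 0)"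

lemma polyfun_lin_coeffs:
  assumes "i \<le> n" "j \<le> n"
  shows "polyfun n 2 (lin_coeffs n j) i x = x j * x i"
proof -
  have "polyfun n 2 (lin_coeffs n j) i x = (\<Sum>l\<le>n. if i = l then x j * x l else 0)"
    unfolding lin_coeffs_def polyfun_sum using assms by (intro sum.cong) (simp_all add: polyfun_unit_quad)
  also have "\<dots> = x j * x i"
    using assms by simp
  finally show ?thesis .
qed

lemma polyfun_G_coeffs:
  assumes "2 \<le> n" "i \<le> n"
  shows "polyfun n 2 (G_coeffs n a b s) i x =
           lin_form a b x * x i + (if i = 2 then of_real s * (x 0 ^ 2 + x 1 ^ 2) else 0)"
  using assms unfolding G_coeffs_def polyfun_add polyfun_scale
  by (simp add: polyfun_lin_coeffs polyfun_unit_quad lin_form_def power2_eq_square algebra_simps)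

lemma lin_form_circle_point:
  assumes "a\<^sup>2 + b\<^sup>2 = 1" shows "lin_form a b (circle_point a b) = 1"
proof -
  have "lin_form a b (circle_point a b) = of_real (a\<^sup>2 + b\<^sup>2)"
    by (simp add: lin_form_def circle_point_def power2_eq_square)
  with assms show ?thesis by simp
qed

lemma circle_point_nonzero:
  assumes "a\<^sup>2 + b\<^sup>2 = 1"
  obtains i where "i \<le> 1" "circle_point a b i \<noteq> (0::'k::real_normed_field)"
proof -
  have "a \<noteq> 0 \<or> b \<noteq> 0"
    using assms by auto
  then show ?thesis
    using that[of 0] that[of 1] by (auto simp: circle_point_def)
qed

lemma lin_coeffs_support:
  assumes "lin_coeffs n j (i, m) \<noteq> (0::'k::real_normed_field)" "j \<le> n"
  shows "i \<le> n \<and> m \<in> Mon n 2"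
proof -
  obtain l where "l \<in> {..n}" "unit_coeffs l (quad_exp j l) (i, m) \<noteq> (0::'k)"
    using assms(1) unfolding lin_coeffs_def by (rule sum.not_neutral_contains_not_neutral)
  moreover from this(2) have "(i, m) = (l, quad_exp j l)"
    unfolding unit_coeffs_def by presburger
  ultimately show ?thesis
    using assms(2) by (simp add: quad_exp_Mon)
qed

lemma G_coeffs_in_Vd:
  assumes "2 \<le> n" "a\<^sup>2 + b\<^sup>2 = 1"
  shows "(G_coeffs n a b s :: 'k::real_normed_field coeffs) \<in> Vd n 2"
proof -
  obtain i where i: "i \<le> 1" "circle_point a b i \<noteq> (0::'k)"
    using circle_point_nonzero assms(2) by blast
  then have "polyfun n 2 (G_coeffs n a b s) i (circle_point a b) \<noteq> (0::'k)"
    using assms by (simp add: polyfun_G_coeffs lin_form_circle_point)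
  then have "G_coeffs n a b s \<noteq> (\<lambda>_. 0::'k)"
    by (auto simp: polyfun_zero_coeffs)
  moreover have "i \<le> n \<and> m \<in> Mon n 2" if "G_coeffs n a b s (i, m) \<noteq> (0::'k)" for i m
  proof -
    have "lin_coeffs n 0 (i, m) \<noteq> (0::'k) \<or> lin_coeffs n 1 (i, m) \<noteq> (0::'k) \<or>
          (i, m) = (2, quad_exp 0 0) \<or> (i, m) = (2, quad_exp 1 1)"
      using that by (rule contrapos_np) (auto simp: G_coeffs_def unit_coeffs_def)
    then show ?thesis
      using assms(1) lin_coeffs_support[of n 0 i m] lin_coeffs_support[of n 1 i m]
        quad_exp_Mon[of 0 n 0] quad_exp_Mon[of 1 n 1]
      by (elim disjE) simp_all
  qed
  ultimately show ?thesis
    unfolding Vd_def by blast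
qed

lemma lin_form_hmap_G_coeffs:
  assumes "2 \<le> n"
  shows "lin_form a b (hmap n 2 (G_coeffs n a b s) x) = lin_form a b x ^ 2"
  using assms by (simp add: hmap_def polyfun_G_coeffs lin_form_def power2_eq_square algebra_simps)

lemma polyfun_G_coeffs_comp_inverse:
  assumes "2 \<le> n" "i \<le> n"
  shows "polyfun n 2 (G_coeffs n a b (- s)) i (hmap n 2 (G_coeffs n a b s) x) = lin_form a b x ^ 3 * x i"
  using assms
  by (simp add: polyfun_G_coeffs lin_form_hmap_G_coeffs)
    (simp add: hmap_def polyfun_G_coeffs algebra_simps power3_eq_cube power2_eq_square)

lemma comp_is_id_G_coeffs:
  assumes "2 \<le> n" "a\<^sup>2 + b\<^sup>2 = 1"
  shows "comp_is_id n 2 (G_coeffs n a b (- s) :: 'k::real_normed_field coeffs) 2 (G_coeffs n a b s)"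
proof -
  obtain i where "i \<le> 1" "circle_point a b i \<noteq> (0::'k)"
    using circle_point_nonzero assms(2) by blast
  moreover have "i \<le> n"
    using \<open>i \<le> 1\<close> assms(1) by simp
  ultimately have nz:
    "polyfun n 2 (G_coeffs n a b (- s)) i (hmap n 2 (G_coeffs n a b s) (circle_point a b)) \<noteq> (0::'k)"
    using assms by (simp add: polyfun_G_coeffs_comp_inverse lin_form_circle_point)
  show ?thesis
    unfolding comp_is_id_def
  proof (intro conjI allI impI)
    show "\<exists>x. \<exists>i\<le>n. polyfun n 2 (G_coeffs n a b (- s)) i (hmap n 2 (G_coeffs n a b s) x) \<noteq> (0::'k)"
      using nz \<open>i \<le> n\<close> by blast
  qed (simp_all add: assms(1) polyfun_G_coeffs_comp_inverse)
qed

lemma birational_G_coeffs: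
  assumes "2 \<le> n" "a\<^sup>2 + b\<^sup>2 = 1"
  shows "birational n 2 (G_coeffs n a b s :: 'k::real_normed_field coeffs)"
  unfolding birational_def
proof (intro conjI exI[of _ 2] bexI[of _ "G_coeffs n a b (- s)"])
  show "comp_is_id n 2 (G_coeffs n a b s) 2 (G_coeffs n a b (- s) :: 'k coeffs)"
    using comp_is_id_G_coeffs[OF assms, of "- s"] by simp
qed (use G_coeffs_in_Vd[OF assms] comp_is_id_G_coeffs[OF assms] in auto)

lemma lin_form_translate:
  assumes "a\<^sup>2 + b\<^sup>2 = 1"
  shows "lin_form a b (\<lambda>k. x k + of_real t * circle_point a b k) = lin_form a b x + of_real t"
proof -
  have "lin_form a b (\<lambda>k. x k + of_real t * circle_point a b k) =
        lin_form a b x + of_real t * lin_form a b (circle_point a b)"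
    by (simp add: lin_form_def circle_point_def algebra_simps)
  with assms show ?thesis
    by (simp add: lin_form_circle_point)
qed

lemma polyfun_G_coeffs_0:
  "2 \<le> n \<Longrightarrow> i \<le> n \<Longrightarrow> polyfun n 2 (G_coeffs n a b 0) i x = lin_form a b x * x i"
  by (simp add: polyfun_G_coeffs)

lemma same_map_G_coeffs_0_iff:
  assumes "2 \<le> n" "a\<^sup>2 + b\<^sup>2 = 1"
  shows "same_map n 2 (G_coeffs n a b 0) e (g :: 'k::real_normed_field coeffs) \<longleftrightarrow>
         (\<forall>x. \<forall>i\<le>n. \<forall>j\<le>n. x i * polyfun n e g j x = x j * polyfun n e g i x)"
proof
  assume same: "same_map n 2 (G_coeffs n a b 0) e g"
  show "\<forall>x. \<forall>i\<le>n. \<forall>j\<le>n. x i * polyfun n e g j x = x j * polyfun n e g i x"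
  proof (intro allI impI)
    fix x :: "nat \<Rightarrow> 'k" and i j assume "i \<le> n" "j \<le> n"
    let ?f = "\<lambda>y. y i * polyfun n e g j y - y j * polyfun n e g i y"
    have "?f x = 0"
    proof (rule vanishes_if_vanishes_off_hyperplane[where f = ?f and L = "lin_form a b"
          and v = "circle_point a b"])
      show "continuous_on UNIV ?f"
        by (intro continuous_intros continuous_on_polyfun continuous_on_product_coordinates)
      show "lin_form a b (\<lambda>k. y k + of_real t * circle_point a b k) = lin_form a b y + of_real t"
        for y :: "nat \<Rightarrow> 'k" and t
        using assms(2) by (rule lin_form_translate)
      show "?f y = 0" if "lin_form a b y \<noteq> 0" for y :: "nat \<Rightarrow> 'k"
      proof -
        have "lin_form a b y * (y i * polyfun n e g j y) = lin_form a b y * (y j * polyfun n e g i y)"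
          using same \<open>i \<le> n\<close> \<open>j \<le> n\<close> assms(1)
          by (simp add: same_map_def polyfun_G_coeffs_0 mult_ac)
        with that show ?thesis
          by simp
      qed
    qed
    then show "x i * polyfun n e g j x = x j * polyfun n e g i x"
      by simp
  qed
next
  assume "\<forall>x. \<forall>i\<le>n. \<forall>j\<le>n. x i * polyfun n e g j x = x j * polyfun n e g i x"
  then show "same_map n 2 (G_coeffs n a b 0) e g"
    using assms(1) by (simp add: same_map_def polyfun_G_coeffs_0 mult_ac)
qed

lemma psi_cong:
  "(\<And>e g. same_map n d h e g \<longleftrightarrow> same_map n d' h' e g) \<Longrightarrow> psi n d h = psi n d' h'"
  by (auto simp: psi_def)

lemma psi_G_coeffs_0:
  assumes "2 \<le> n" "a\<^sup>2 + b\<^sup>2 = 1"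
  shows "psi n 2 (G_coeffs n a b 0 :: 'k::real_normed_field coeffs) = psi n 2 (G_coeffs n 1 0 0)"
  by (rule psi_cong) (simp add: same_map_G_coeffs_0_iff assms)

section \<open>The Euclidean topologies\<close>

lemma openin_quotient_top:
  "openin (quotient_top X f) U \<longleftrightarrow> U \<subseteq> f ` topspace X \<and> openin X {x \<in> topspace X. f x \<in> U}"
proof -
  have "{x \<in> topspace X. f x \<in> S \<inter> T} = {x \<in> topspace X. f x \<in> S} \<inter> {x \<in> topspace X. f x \<in> T}" for S T
    by blast
  moreover have "{x \<in> topspace X. f x \<in> \<Union>\<K>} = (\<Union>K\<in>\<K>. {x \<in> topspace X. f x \<in> K})" for \<K>
    by blast
  ultimately have "istopology (\<lambda>U. U \<subseteq> f ` topspace X \<and> openin X {x \<in> topspace X. f x \<in> U})"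
    unfolding istopology_def by auto
  then show ?thesis
    by (simp add: quotient_top_def)
qed

lemma topspace_quotient_top: "topspace (quotient_top X f) = f ` topspace X"
proof (rule subset_antisym)
  have "openin (quotient_top X f) (topspace (quotient_top X f))"
    by (rule openin_topspace)
  then show "topspace (quotient_top X f) \<subseteq> f ` topspace X"
    by (simp only: openin_quotient_top)
  have "{x \<in> topspace X. f x \<in> f ` topspace X} = topspace X"
    by blast
  then have "openin (quotient_top X f) (f ` topspace X)"
    by (simp add: openin_quotient_top)
  then show "f ` topspace X \<subseteq> topspace (quotient_top X f)"
    by (rule openin_subset)
qed

lemma openin_BirTop:
  fixes U :: "'k::real_normed_field bir set"
  shows "openin (BirTop n) U \<longleftrightarrow> U \<subseteq> Bir n \<and> (\<forall>d\<ge>1. openin (Bir_le_top n d) (U \<inter> Bir_le n d))"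
proof -
  let ?L = "\<lambda>U :: 'k bir set. U \<subseteq> Bir n \<and> (\<forall>d\<ge>1. openin (Bir_le_top n d) (U \<inter> Bir_le n d))"
  have "?L (S \<inter> T)" if "?L S" "?L T" for S T
  proof -
    have "openin (Bir_le_top n d) ((S \<inter> Bir_le n d) \<inter> (T \<inter> Bir_le n d))" if "d \<ge> 1" for d
      by (rule openin_Int) (use \<open>?L S\<close> \<open>?L T\<close> that in auto)
    then show ?thesis
      using \<open>?L S\<close> by (auto simp: Int_ac)
  qed
  moreover have "?L (\<Union>\<K>)" if "\<forall>K\<in>\<K>. ?L K" for \<K>
  proof -
    have "openin (Bir_le_top n d) (\<Union>K\<in>\<K>. K \<inter> Bir_le n d)" if "d \<ge> 1" for d
      by (rule openin_Union) (use \<open>\<forall>K\<in>\<K>. ?L K\<close> that in auto)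
    then show ?thesis
      using \<open>\<forall>K\<in>\<K>. ?L K\<close> by (auto simp: Int_UN_distrib2)
  qed
  ultimately have "istopology ?L"
    unfolding istopology_def by blast
  then show ?thesis
    unfolding BirTop_def by (simp only: topology_inverse')
qed

lemma topspace_Wtop: "topspace (Wtop n d) = W n d"
  by (simp add: Wtop_def topspace_quotient_top W_def)

lemma topspace_Htop: "topspace (Htop n d) = H n d"
  by (auto simp: Htop_def topspace_Wtop H_def)

lemma topspace_Bir_le_top: "topspace (Bir_le_top n d) = Bir_le n d"
  by (simp add: Bir_le_top_def topspace_quotient_top topspace_Htop Bir_le_def)

lemma topspace_BirTop: "topspace (BirTop n) = (Bir n :: 'k::real_normed_field bir set)"
proof (rule subset_antisym)
  have "openin (BirTop n) (topspace (BirTop n :: 'k bir topology))"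
    by (rule openin_topspace)
  then show "topspace (BirTop n) \<subseteq> (Bir n :: 'k bir set)"
    unfolding openin_BirTop by (rule conjunct1)
  have "Bir n \<inter> Bir_le n d = topspace (Bir_le_top n d :: 'k bir topology)" if "d \<ge> 1" for d
    using that by (auto simp: Bir_def topspace_Bir_le_top)
  then have "openin (Bir_le_top n d) (Bir n \<inter> Bir_le n d :: 'k bir set)" if "d \<ge> 1" for d
    using that by (metis openin_topspace)
  then have "openin (BirTop n) (Bir n :: 'k bir set)"
    by (simp add: openin_BirTop)
  then show "Bir n \<subseteq> topspace (BirTop n :: 'k bir topology)"
    by (rule openin_subset)
qed

lemma mem_proj_class: "h \<in> proj_class c \<longleftrightarrow> (\<exists>s. s \<noteq> 0 \<and> h = (\<lambda>p. s * c p))"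
  by (auto simp: proj_class_def)

lemma some_mem_proj_class: "\<exists>s. s \<noteq> 0 \<and> (SOME h. h \<in> proj_class c) = (\<lambda>p. s * c p)"
proof -
  have "c \<in> proj_class c"
    unfolding mem_proj_class by (intro exI[of _ 1]) simp
  then have "(SOME h. h \<in> proj_class c) \<in> proj_class c"
    by (rule someI[where P = "\<lambda>h. h \<in> proj_class c"])
  then show ?thesis
    by (simp add: mem_proj_class)
qed

lemma psi_scale: "s \<noteq> 0 \<Longrightarrow> psi n d (\<lambda>p. s * c p) = psi n d c"
  by (rule psi_cong) (auto simp: same_map_def polyfun_scale mult.assoc)

lemma pi_proj_class: "pi n d (proj_class c) = psi n d c"
  using some_mem_proj_class[of c] by (auto simp: pi_def psi_scale)

lemma proj_class_G_coeffs_in_H: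
  assumes "2 \<le> n" "a\<^sup>2 + b\<^sup>2 = 1"
  shows "proj_class (G_coeffs n a b s :: 'k::real_normed_field coeffs) \<in> H n 2"
proof -
  have "G_coeffs n a b s \<in> proj_class (G_coeffs n a b s :: 'k coeffs)"
    unfolding mem_proj_class by (intro exI[of _ 1]) simp
  with G_coeffs_in_Vd[OF assms] birational_G_coeffs[OF assms] show ?thesis
    by (auto simp: H_def W_def)
qed

lemma psi_G_coeffs_in_Bir:
  assumes "2 \<le> n" "a\<^sup>2 + b\<^sup>2 = 1"
  shows "psi n 2 (G_coeffs n a b s :: 'k::real_normed_field coeffs) \<in> Bir n"
  unfolding Bir_def
proof (rule UN_I[of 2])
  show "psi n 2 (G_coeffs n a b s :: 'k coeffs) \<in> Bir_le n 2"
    using proj_class_G_coeffs_in_H[OF assms, of s, THEN imageI[where f = "pi n 2"]]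
    by (simp add: Bir_le_def pi_proj_class)
qed simp

lemma psi_G_coeffs_in_open_iff:
  fixes U :: "'k::real_normed_field bir set"
  assumes "2 \<le> n" "openin (BirTop n) U"
  obtains T :: "'k coeffs set"
  where "open T" "\<And>a b s. a\<^sup>2 + b\<^sup>2 = 1 \<Longrightarrow> psi n 2 (G_coeffs n a b s) \<in> U \<longleftrightarrow> G_coeffs n a b s \<in> T"
proof -
  have "openin (Bir_le_top n 2) (U \<inter> Bir_le n 2)"
    using assms(2) by (simp add: openin_BirTop)
  then have "openin (Htop n 2) {w \<in> H n 2. pi n 2 w \<in> U \<inter> Bir_le n 2}"
    by (simp add: Bir_le_top_def openin_quotient_top topspace_Htop)
  then obtain V where V: "openin (Wtop n 2) V" "{w \<in> H n 2. pi n 2 w \<in> U \<inter> Bir_le n 2} = V \<inter> H n 2"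
    unfolding Htop_def openin_subtopology by blast
  then have "openin (subtopology euclidean (Vd n 2)) {c \<in> Vd n 2. proj_class c \<in> V}"
    by (simp add: Wtop_def openin_quotient_top)
  then obtain T where T: "open T" "{c \<in> Vd n 2. proj_class c \<in> V} = T \<inter> Vd n 2"
    unfolding openin_open by auto
  show ?thesis
  proof (rule that[OF T(1)])
    fix a b s :: real
    assume ab: "a\<^sup>2 + b\<^sup>2 = 1"
    let ?c = "G_coeffs n a b s :: 'k coeffs"
    have "proj_class ?c \<in> H n 2" "?c \<in> Vd n 2"
      using proj_class_G_coeffs_in_H[OF assms(1) ab] G_coeffs_in_Vd[OF assms(1) ab] .
    moreover have "pi n 2 (proj_class ?c) \<in> Bir_le n 2"
      unfolding Bir_le_def using \<open>proj_class ?c \<in> H n 2\<close> by (rule imageI)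
    ultimately have "psi n 2 ?c \<in> U \<longleftrightarrow> proj_class ?c \<in> {w \<in> H n 2. pi n 2 w \<in> U \<inter> Bir_le n 2}"
      by (simp add: pi_proj_class)
    also have "\<dots> \<longleftrightarrow> ?c \<in> {c \<in> Vd n 2. proj_class c \<in> V}"
      using V(2) \<open>proj_class ?c \<in> H n 2\<close> \<open>?c \<in> Vd n 2\<close> by blast
    finally show "psi n 2 ?c \<in> U \<longleftrightarrow> ?c \<in> T"
      using T(2) \<open>?c \<in> Vd n 2\<close> by blast
  qed
qed

section \<open>A continuous path in Bir\<close>

lemma continuous_on_G_coeffs:
  "continuous_on UNIV (\<lambda>(a, b, s). G_coeffs n a b s :: 'k::real_normed_field coeffs)"
  unfolding G_coeffs_def case_prod_beta
  by (intro continuous_on_coordinatewise_then_product continuous_intros)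

lemma continuous_map_psi_G_coeffs:
  assumes "2 \<le> n"
  shows "continuous_map (subtopology euclidean {(a, b, s). a\<^sup>2 + b\<^sup>2 = 1}) (BirTop n)
           (\<lambda>(a, b, s). psi n 2 (G_coeffs n a b s :: 'k::real_normed_field coeffs))"
  unfolding continuous_map_def
proof (intro conjI allI impI)
  show "(\<lambda>(a, b, s). psi n 2 (G_coeffs n a b s :: 'k coeffs))
          \<in> topspace (subtopology euclidean {(a, b, s). a\<^sup>2 + b\<^sup>2 = 1}) \<rightarrow> topspace (BirTop n)"
    using psi_G_coeffs_in_Bir[OF assms] by (auto simp: topspace_BirTop)
next
  fix U :: "'k bir set"
  assume "openin (BirTop n) U"
  then obtain T :: "'k coeffs set" where T: "open T"
    "\<And>a b s. a\<^sup>2 + b\<^sup>2 = 1 \<Longrightarrow> psi n 2 (G_coeffs n a b s) \<in> U \<longleftrightarrow> G_coeffs n a b s \<in> T"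
    using psi_G_coeffs_in_open_iff[OF assms] by blast
  have "open ((\<lambda>(a, b, s). G_coeffs n a b s :: 'k coeffs) -` T)"
    using T(1) continuous_on_G_coeffs by (rule open_vimage)
  moreover have "{v \<in> topspace (subtopology euclidean {(a, b, s). a\<^sup>2 + b\<^sup>2 = 1}).
                   (case v of (a, b, s) \<Rightarrow> psi n 2 (G_coeffs n a b s)) \<in> U} =
                 (\<lambda>(a, b, s). G_coeffs n a b s :: 'k coeffs) -` T \<inter> {(a, b, s). a\<^sup>2 + b\<^sup>2 = 1}"
    using T(2) by auto
  ultimately show "openin (subtopology euclidean {(a, b, s). a\<^sup>2 + b\<^sup>2 = 1})
      {v \<in> topspace (subtopology euclidean {(a, b, s). a\<^sup>2 + b\<^sup>2 = 1}).
         (case v of (a, b, s) \<Rightarrow> psi n 2 (G_coeffs n a b s)) \<in> U}"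
    by (auto simp: openin_subtopology)
qed

lemma curve_near_compact_eventually_in_open:
  fixes \<gamma> :: "real \<Rightarrow> 'a::metric_space"
  assumes "open V" "compact C" "C \<subseteq> V" "\<And>t. t \<noteq> 0 \<Longrightarrow> \<exists>c\<in>C. dist (\<gamma> t) c \<le> \<bar>t\<bar>"
  obtains e where "e > 0" "\<And>u. u \<noteq> 0 \<Longrightarrow> \<bar>u\<bar> < e \<Longrightarrow> \<gamma> u \<in> V"
proof -
  obtain e where "e > 0" and e: "\<And>c. c \<in> C \<Longrightarrow> ball c e \<subseteq> V"
    using Heine_Borel_lemma[of C "{V}"] assms(1-3) by auto
  have "\<gamma> u \<in> V" if "u \<noteq> 0" "\<bar>u\<bar> < e" for u
  proof -
    obtain c where "c \<in> C" "dist (\<gamma> u) c \<le> \<bar>u\<bar>"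
      using assms(4) \<open>u \<noteq> 0\<close> by blast
    with \<open>\<bar>u\<bar> < e\<close> e show ?thesis
      by (force simp: dist_commute)
  qed
  with \<open>e > 0\<close> show ?thesis
    by (rule that)
qed

text \<open>F \<circ> \<gamma> is continuous at 0 although \<gamma> need not be, because \<gamma> approaches C, which F collapses.\<close>

lemma continuous_map_compose_collapsing_curve:
  fixes \<gamma> :: "real \<Rightarrow> 'a::metric_space"
  assumes F: "continuous_map (subtopology euclidean S) Y F"
    and \<gamma>_in: "\<And>t. \<gamma> t \<in> S"
    and \<gamma>_cont: "continuous_on (- {0}) \<gamma>"
    and C: "compact C" "C \<subseteq> S" "\<And>c. c \<in> C \<Longrightarrow> F c = F (\<gamma> 0)"
    and \<gamma>_near: "\<And>t. t \<noteq> 0 \<Longrightarrow> \<exists>c\<in>C. dist (\<gamma> t) c \<le> \<bar>t\<bar>"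
  shows "continuous_map euclideanreal Y (F \<circ> \<gamma>)"
  unfolding continuous_map_def
proof (intro conjI allI impI)
  show "F \<circ> \<gamma> \<in> topspace euclideanreal \<rightarrow> topspace Y"
    using F \<gamma>_in by (auto simp: continuous_map_def)
  fix U
  assume "openin Y U"
  then have "openin (subtopology euclidean S) {x \<in> S. F x \<in> U}"
    using F by (simp add: continuous_map_def)
  then obtain V where V: "open V" "{x \<in> S. F x \<in> U} = S \<inter> V"
    by (auto simp: openin_open)
  have "open (\<gamma> -` V)"
    unfolding open_contains_ball
  proof
    fix t
    assume t: "t \<in> \<gamma> -` V"
    show "\<exists>e>0. ball t e \<subseteq> \<gamma> -` V"
    proof (cases "t = 0")
      case False
      have "open (- {0} \<inter> \<gamma> -` V)"
        using \<gamma>_cont open_Compl[OF closed_singleton] V(1) by (rule continuous_open_preimage)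
      then obtain e where "e > 0" "ball t e \<subseteq> - {0} \<inter> \<gamma> -` V"
        using t False open_contains_ball by blast
      then show ?thesis
        by blast
    next
      case True
      then have "\<gamma> 0 \<in> {x \<in> S. F x \<in> U}"
        using t \<gamma>_in V(2) by simp
      then have "c \<in> {x \<in> S. F x \<in> U}" if "c \<in> C" for c
        using that C(2,3) by auto
      then have "C \<subseteq> V"
        using V(2) by auto
      then show ?thesis
      proof (rule curve_near_compact_eventually_in_open[OF V(1) C(1) _ \<gamma>_near])
        fix e :: real
        assume "e > 0" and e: "\<And>u. u \<noteq> 0 \<Longrightarrow> \<bar>u\<bar> < e \<Longrightarrow> \<gamma> u \<in> V"
        have "ball 0 e \<subseteq> \<gamma> -` V"
        proof
          fix u :: real
          assume "u \<in> ball 0 e"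
          then have "\<bar>u\<bar> < e"
            by simp
          with e t True show "u \<in> \<gamma> -` V"
            by (cases "u = 0") auto
        qed
        with \<open>e > 0\<close> True show ?thesis
          by blast
      qed
    qed
  qed
  moreover have "{t \<in> topspace euclideanreal. (F \<circ> \<gamma>) t \<in> U} = \<gamma> -` V"
    using V(2) \<gamma>_in by auto
  ultimately show "openin euclideanreal {t \<in> topspace euclideanreal. (F \<circ> \<gamma>) t \<in> U}"
    by simp
qed

definition spiral :: "real \<Rightarrow> real \<times> real \<times> real" where
  "spiral t = (if t = 0 then (1, 0, 0) else (cos (1 / t), sin (1 / t), t))"

definition rho :: "nat \<Rightarrow> real \<Rightarrow> 'k::real_normed_field bir" where
  "rho n = (\<lambda>(a, b, s). psi n 2 (G_coeffs n a b s)) \<circ> spiral"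

lemma continuous_map_rho:
  assumes "2 \<le> n"
  shows "continuous_map (subtopology euclideanreal {-1..1}) (BirTop n) (rho n :: real \<Rightarrow> 'k::real_normed_field bir)"
proof -
  let ?C = "(\<lambda>(a, b). (a, b, 0::real)) ` sphere (0::real \<times> real) 1"
  have "continuous_map euclideanreal (BirTop n) (rho n :: real \<Rightarrow> 'k bir)"
    unfolding rho_def
  proof (rule continuous_map_compose_collapsing_curve[OF continuous_map_psi_G_coeffs[OF assms]])
    show "spiral t \<in> {(a, b, s). a\<^sup>2 + b\<^sup>2 = 1}" for t
      by (simp add: spiral_def)
    have "continuous_on (- {0}) (\<lambda>t::real. (cos (1 / t), sin (1 / t), t))"
      by (intro continuous_intros) auto
    then show "continuous_on (- {0}) spiral"
      by (rule continuous_on_eq) (simp add: spiral_def)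
    show "compact ?C"
      unfolding case_prod_beta by (intro compact_continuous_image compact_sphere continuous_intros)
    show "?C \<subseteq> {(a, b, s). a\<^sup>2 + b\<^sup>2 = 1}"
      by (auto simp: norm_Pair)
    show "(case c of (a, b, s) \<Rightarrow> psi n 2 (G_coeffs n a b s :: 'k coeffs)) =
          (case spiral 0 of (a, b, s) \<Rightarrow> psi n 2 (G_coeffs n a b s))" if c: "c \<in> ?C" for c
    proof -
      obtain a b where "c = (a, b, 0)" "a\<^sup>2 + b\<^sup>2 = 1"
        using c by (auto simp: norm_Pair)
      then show ?thesis
        using psi_G_coeffs_0[OF assms] by (simp add: spiral_def)
    qed
    show "\<exists>c\<in>?C. dist (spiral t) c \<le> \<bar>t\<bar>" if "t \<noteq> 0" for t
    proof (intro bexI)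
      show "dist (spiral t) (cos (1 / t), sin (1 / t), 0) \<le> \<bar>t\<bar>"
        using that by (simp add: spiral_def dist_Pair_Pair)
      have "(cos (1 / t), sin (1 / t)) \<in> sphere (0::real \<times> real) 1"
        by (simp add: norm_Pair)
      then show "(cos (1 / t), sin (1 / t), 0) \<in> ?C"
        by (rule rev_image_eqI) simp
    qed
  qed
  then show ?thesis
    by (rule continuous_map_from_subtopology)
qed

section \<open>Non-existence of local lifts\<close>

lemma rho_0: "rho n 0 = psi n 2 (G_coeffs n 1 0 0)"
  by (simp add: rho_def spiral_def)

lemma rho_nonzero: "t \<noteq> 0 \<Longrightarrow> rho n t = psi n 2 (G_coeffs n (cos (1 / t)) (sin (1 / t)) t)"
  by (simp add: rho_def spiral_def)

lemma same_map_if_psi_eq: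
  assumes "psi n d h = psi n e g" "birational n e g" "e \<ge> 1"
  shows "same_map n d h e g"
proof -
  have "(e, g) \<in> psi n e g"
    using assms(2,3) by (simp add: psi_def same_map_def mult.commute)
  then have "(e, g) \<in> psi n d h"
    by (simp only: assms(1))
  then show ?thesis
    by (simp add: psi_def)
qed

lemma birational_not_identically_zero:
  assumes "birational n d h"
  obtains x i where "i \<le> n" "polyfun n d h i x \<noteq> 0"
proof -
  obtain e g where "e \<ge> 1" "comp_is_id n e g d h"
    using assms by (auto simp: birational_def)
  then obtain x i where "polyfun n e g i (hmap n d h x) \<noteq> 0"
    by (auto simp: comp_is_id_def)
  with \<open>e \<ge> 1\<close> have "hmap n d h x \<noteq> (\<lambda>_. 0)"
    by (auto simp: polyfun_at_origin)
  then show ?thesis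
    using that by (auto simp: hmap_def fun_eq_iff split: if_splits)
qed

lemma mem_W_eq_scale_some:
  assumes "w \<in> W n d" "h \<in> w"
  shows "\<exists>s. s \<noteq> 0 \<and> h = (\<lambda>p. s * (SOME h. h \<in> w) p)"
proof -
  obtain c where w: "w = proj_class c"
    using assms(1) by (auto simp: W_def)
  obtain s where s: "s \<noteq> 0" "h = (\<lambda>p. s * c p)"
    using assms(2) by (auto simp: w mem_proj_class)
  obtain s' where s': "s' \<noteq> 0" "(SOME h. h \<in> w) = (\<lambda>p. s' * c p)"
    using some_mem_proj_class[of c] by (auto simp: w)
  show ?thesis
    using s s' by (intro exI[of _ "s / s'"]) (auto simp: fun_eq_iff)
qed

lemma H_some_not_identically_zero:
  assumes "w \<in> H n d"
  obtains x i where "i \<le> n" "polyfun n d (SOME h. h \<in> w) i x \<noteq> 0"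
proof -
  obtain h where "h \<in> w" "birational n d h" "w \<in> W n d"
    using assms by (auto simp: H_def)
  then obtain s where "h = (\<lambda>p. s * (SOME h. h \<in> w) p)"
    using mem_W_eq_scale_some by blast
  moreover obtain x i where "i \<le> n" "polyfun n d h i x \<noteq> 0"
    using birational_not_identically_zero[OF \<open>birational n d h\<close>] .
  ultimately show ?thesis
    using that by (auto simp: polyfun_scale)
qed

lemma openin_Htop_some_nonzero:
  "openin (Htop n d) {w \<in> H n d. polyfun n d (SOME h. h \<in> w) i y \<noteq> (0::'k::real_normed_field)}"
proof -
  define V :: "'k coeffs set set" where "V = {w \<in> W n d. polyfun n d (SOME h. h \<in> w) i y \<noteq> 0}"
  have "{c \<in> Vd n d. proj_class c \<in> V} = Vd n d \<inter> {c. polyfun n d c i y \<noteq> 0}"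
  proof -
    have "polyfun n d (SOME h. h \<in> proj_class c) i y \<noteq> 0 \<longleftrightarrow> polyfun n d c i y \<noteq> 0" for c :: "'k coeffs"
      using some_mem_proj_class[of c] by (auto simp: polyfun_scale)
    then show ?thesis
      by (auto simp: V_def W_def)
  qed
  moreover have "open {c :: 'k coeffs. polyfun n d c i y \<noteq> 0}"
    by (intro open_Collect_neq continuous_on_polyfun_coeffs continuous_on_const)
  ultimately have "openin (Wtop n d) V"
    by (auto simp: Wtop_def openin_quotient_top openin_open V_def W_def)
  moreover have "{w \<in> H n d. polyfun n d (SOME h. h \<in> w) i y \<noteq> 0} = V \<inter> H n d"
    by (auto simp: V_def H_def)
  ultimately show ?thesis
    unfolding Htop_def openin_subtopology by blast
qed

lemma same_map_G_coeffs_kernel: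
  assumes "2 \<le> n" "same_map n d h 2 (G_coeffs n a b s)" "s \<noteq> 0"
    and "lin_form a b y = 0" "y 0 ^ 2 + y 1 ^ 2 \<noteq> (0::'k::real_normed_field)"
  shows "polyfun n d h 0 y = 0"
proof -
  have "polyfun n d h 0 y * polyfun n 2 (G_coeffs n a b s) 2 y =
        polyfun n d h 2 y * polyfun n 2 (G_coeffs n a b s) 0 y"
    using assms(1,2) by (simp add: same_map_def)
  then have "polyfun n d h 0 y * (of_real s * (y 0 ^ 2 + y 1 ^ 2)) = 0"
    using assms(1,4) by (simp add: polyfun_G_coeffs)
  with assms(3,5) show ?thesis
    by simp
qed

lemma same_map_identity_vanishes:
  assumes "2 \<le> n" "same_map n d h 2 (G_coeffs n 1 0 0)" "\<And>x. polyfun n d h 0 x = 0" "j \<le> n"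
  shows "polyfun n d h j x = (0::'k::real_normed_field)"
proof (rule vanishes_if_vanishes_off_hyperplane[where f = "polyfun n d h j" and L = "\<lambda>x. x 0"
      and v = "\<lambda>k. of_bool (k = 0)"])
  show "continuous_on UNIV (polyfun n d h j)"
    by (rule continuous_on_polyfun)
  show "polyfun n d h j y = 0" if "y 0 \<noteq> 0" for y :: "nat \<Rightarrow> 'k"
  proof -
    have "polyfun n d h 0 y * polyfun n 2 (G_coeffs n 1 0 0) j y =
          polyfun n d h j y * polyfun n 2 (G_coeffs n 1 0 0) 0 y"
      using assms(1,2,4) by (simp add: same_map_def)
    then have "polyfun n d h j y * (y 0 * y 0) = 0"
      using assms(1,3,4) by (simp add: polyfun_G_coeffs_0 lin_form_def)
    with that show ?thesis
      by simp
  qed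
qed simp

lemma exists_small_root_cos_sin:
  assumes "0 < \<delta>"
  obtains t :: real where "0 < t" "t < \<delta>" "cos (1 / t) * r + sin (1 / t) = 0"
proof -
  define \<theta> where "\<theta> = arctan (- r)"
  have \<theta>: "cos \<theta> * r + sin \<theta> = 0" "- (Transcendental.pi / 2) < \<theta>"
    using arctan_bounded[of "- r"] by (simp_all add: \<theta>_def sin_arctan cos_arctan divide_simps)
  obtain k :: nat where "1 / \<delta> + 2 < 2 * Transcendental.pi * k"
    using reals_Archimedean2[of "(1 / \<delta> + 2) / (2 * Transcendental.pi)"] pi_gt_zero
    by (auto simp: field_simps)
  with \<theta>(2) pi_less_4 have big: "1 / \<delta> < \<theta> + 2 * Transcendental.pi * k"
    by linarith
  with assms have pos: "0 < \<theta> + 2 * Transcendental.pi * k"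
    by (smt (verit) divide_pos_pos)
  show ?thesis
  proof (rule that[of "1 / (\<theta> + 2 * Transcendental.pi * k)"])
    show "0 < 1 / (\<theta> + 2 * Transcendental.pi * k)"
      using pos by simp
    show "1 / (\<theta> + 2 * Transcendental.pi * k) < \<delta>"
      using big pos assms by (simp add: field_simps)
    have "sin (\<theta> + 2 * Transcendental.pi * k) = sin \<theta> \<and> cos (\<theta> + 2 * Transcendental.pi * k) = cos \<theta>"
      unfolding sin_cos_eq_iff by (intro exI[of _ "int k"]) simp
    then show "cos (1 / (1 / (\<theta> + 2 * Transcendental.pi * k))) * r +
               sin (1 / (1 / (\<theta> + 2 * Transcendental.pi * k))) = 0"
      using \<theta>(1) by simp
  qed
qed

lemma continuous_map_nbhd:
  assumes "continuous_map (subtopology euclideanreal I) X f" "open I" "t\<^sub>0 \<in> I" "openin X V" "f t\<^sub>0 \<in> V"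
  obtains \<delta> where "\<delta> > 0" "\<And>t. \<bar>t - t\<^sub>0\<bar> < \<delta> \<Longrightarrow> f t \<in> V"
proof -
  have "openin (subtopology euclideanreal I) {t \<in> I. f t \<in> V}"
    using assms(1,4) by (simp add: continuous_map_def)
  then have "open {t \<in> I. f t \<in> V}"
    using assms(2) by (rule openin_open_trans)
  then obtain \<delta> where "\<delta> > 0" "ball t\<^sub>0 \<delta> \<subseteq> {t \<in> I. f t \<in> V}"
    using assms(3,5) open_contains_ball by blast
  show ?thesis
  proof (rule that[OF \<open>\<delta> > 0\<close>])
    fix t
    assume "\<bar>t - t\<^sub>0\<bar> < \<delta>"
    then have "t \<in> ball t\<^sub>0 \<delta>"
      by (simp add: dist_real_def abs_minus_commute)
    with \<open>ball t\<^sub>0 \<delta> \<subseteq> {t \<in> I. f t \<in> V}\<close> show "f t \<in> V"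
      by blast
  qed
qed

lemma lift_at_0_vanishes_on_real_slopes:
  fixes \<rho>' :: "real \<Rightarrow> 'k::real_normed_field coeffs set"
  assumes n: "2 \<le> n" and "0 < \<epsilon>"
    and cont: "continuous_map (subtopology euclideanreal {-\<epsilon><..<\<epsilon>}) (Htop n d) \<rho>'"
    and lift: "\<And>t. t \<in> {-\<epsilon><..<\<epsilon>} \<Longrightarrow> pi n d (\<rho>' t) = rho n t"
    and "x 1 \<noteq> 0"
  shows "polyfun n d (SOME h. h \<in> \<rho>' 0) 0 (x(0 := of_real r * x 1)) = 0"
proof (rule ccontr)
  define y where "y = x(0 := of_real r * x 1)"
  let ?V = "{w \<in> H n d. polyfun n d (SOME h. h \<in> w) 0 y \<noteq> 0}"
  assume "polyfun n d (SOME h. h \<in> \<rho>' 0) 0 (x(0 := of_real r * x 1)) \<noteq> 0"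
  moreover have "\<rho>' 0 \<in> H n d"
    using cont \<open>0 < \<epsilon>\<close> by (auto simp: continuous_map_def topspace_Htop)
  ultimately have "\<rho>' 0 \<in> ?V"
    by (simp add: y_def)
  obtain \<delta> where "\<delta> > 0" and \<delta>: "\<And>t. \<bar>t - 0\<bar> < \<delta> \<Longrightarrow> \<rho>' t \<in> ?V"
    by (rule continuous_map_nbhd[OF cont _ _ openin_Htop_some_nonzero \<open>\<rho>' 0 \<in> ?V\<close>])
      (use \<open>0 < \<epsilon>\<close> in auto)
  then obtain t where t: "0 < t" "t < min \<delta> \<epsilon>" "cos (1 / t) * r + sin (1 / t) = 0"
    using exists_small_root_cos_sin[of "min \<delta> \<epsilon>" r] \<open>0 < \<epsilon>\<close> by auto
  let ?G = "G_coeffs n (cos (1 / t)) (sin (1 / t)) t :: 'k coeffs"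
  have same: "same_map n d (SOME h. h \<in> \<rho>' t) 2 ?G"
  proof (rule same_map_if_psi_eq)
    show "psi n d (SOME h. h \<in> \<rho>' t) = psi n 2 ?G"
      using lift[of t] t rho_nonzero[of t n] by (simp add: pi_def)
    show "birational n 2 ?G"
      by (rule birational_G_coeffs[OF n]) simp
  qed simp
  have kernel: "lin_form (cos (1 / t)) (sin (1 / t)) y = 0"
  proof -
    have "lin_form (cos (1 / t)) (sin (1 / t)) y = of_real (cos (1 / t) * r + sin (1 / t)) * x 1"
      by (simp add: lin_form_def y_def algebra_simps)
    with t(3) show ?thesis
      by simp
  qed
  have sum_squares: "y 0 ^ 2 + y 1 ^ 2 \<noteq> 0"
  proof -
    have "y 0 ^ 2 + y 1 ^ 2 = of_real (r\<^sup>2 + 1) * x 1 ^ 2"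
      by (simp add: y_def algebra_simps power2_eq_square)
    moreover have "r\<^sup>2 + 1 \<noteq> 0"
      by (smt (verit) zero_le_power2)
    ultimately show ?thesis
      using \<open>x 1 \<noteq> 0\<close> by (simp only: mult_eq_0_iff of_real_eq_0_iff power_eq_0_iff) simp
  qed
  have "t \<noteq> 0"
    using t(1) by simp
  have "\<rho>' t \<in> ?V"
    using \<delta> t by auto
  moreover have "polyfun n d (SOME h. h \<in> \<rho>' t) 0 y = 0"
    by (rule same_map_G_coeffs_kernel[OF n same \<open>t \<noteq> 0\<close> kernel sum_squares])
  ultimately show False
    by simp
qed

lemma no_continuous_lift:
  fixes \<rho>' :: "real \<Rightarrow> 'k::real_normed_field coeffs set"
  assumes n: "2 \<le> n" and "0 < \<epsilon>"
    and real_slopes: "\<And>(c :: 'k coeffs) x. x 1 \<noteq> 0 \<Longrightarrow>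
           (\<And>r::real. polyfun n d c 0 (x(0 := of_real r * x 1)) = 0) \<Longrightarrow> polyfun n d c 0 x = 0"
    and cont: "continuous_map (subtopology euclideanreal {-\<epsilon><..<\<epsilon>}) (Htop n d) \<rho>'"
    and lift: "\<And>t. t \<in> {-\<epsilon><..<\<epsilon>} \<Longrightarrow> pi n d (\<rho>' t) = rho n t"
  shows False
proof -
  let ?h = "SOME h. h \<in> \<rho>' 0"
  have "\<rho>' 0 \<in> H n d"
    using cont \<open>0 < \<epsilon>\<close> by (auto simp: continuous_map_def topspace_Htop)
  have same: "same_map n d ?h 2 (G_coeffs n 1 0 0)"
  proof (rule same_map_if_psi_eq)
    show "psi n d ?h = psi n 2 (G_coeffs n 1 0 0)"
      using lift[of 0] \<open>0 < \<epsilon>\<close> by (simp add: pi_def rho_0)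
  qed (use birational_G_coeffs[OF n, of 1 0] in simp_all)
  have "polyfun n d ?h 0 x = 0" for x
  proof (rule vanishes_if_vanishes_off_hyperplane[where f = "polyfun n d ?h 0" and L = "\<lambda>x. x 1"
        and v = "\<lambda>k. of_bool (k = 1)"])
    show "continuous_on UNIV (polyfun n d ?h 0)"
      by (rule continuous_on_polyfun)
    show "polyfun n d ?h 0 y = 0" if "y 1 \<noteq> 0" for y
      by (rule real_slopes[OF that lift_at_0_vanishes_on_real_slopes[where x = y, OF n \<open>0 < \<epsilon>\<close> cont lift that]])
  qed simp
  then have "polyfun n d ?h j x = 0" if "j \<le> n" for j x
    using same_map_identity_vanishes[OF n same _ that] by simp
  moreover obtain x i where "i \<le> n" "polyfun n d ?h i x \<noteq> 0"
    by (rule H_some_not_identically_zero[OF \<open>\<rho>' 0 \<in> H n d\<close>])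
  ultimately show False
    by simp
qed

lemma polyfun_real_zero_on_real_slopes:
  fixes x :: "nat \<Rightarrow> real"
  assumes "x 1 \<noteq> 0" "\<And>r::real. polyfun n d c i (x(0 := of_real r * x 1)) = 0"
  shows "polyfun n d c i x = 0"
proof -
  have "x(0 := of_real (x 0 / x 1) * x 1) = x"
    using assms(1) by auto
  then show ?thesis
    using assms(2)[of "x 0 / x 1"] by simp
qed

lemma zero_islimpt_Reals: "(0::complex) islimpt \<real>"
  unfolding islimpt_approachable
proof (intro allI impI)
  fix e :: real
  assume "0 < e"
  then show "\<exists>z::complex\<in>\<real>. z \<noteq> 0 \<and> dist z 0 < e"
    by (intro bexI[of _ "complex_of_real (e / 2)"]) (auto simp: dist_norm)
qed

lemma polyfun_complex_zero_on_real_slopes: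
  fixes x :: "nat \<Rightarrow> complex"
  assumes "x 1 \<noteq> 0" "\<And>r::real. polyfun n d c i (x(0 := of_real r * x 1)) = 0"
  shows "polyfun n d c i x = 0"
proof -
  define f where "f z = polyfun n d c i (\<lambda>j. (x(0 := 0)) j + z * (if j = 0 then x 1 else 0))" for z
  have f_eq: "f z = polyfun n d c i (x(0 := z * x 1))" for z
    unfolding f_def by (rule arg_cong[where f = "polyfun n d c i"]) auto
  have "f (x 0 / x 1) = 0"
  proof (rule analytic_continuation[of f UNIV \<real> 0])
    show "f holomorphic_on UNIV"
      unfolding f_def polyfun_def by (intro holomorphic_intros)
    show "f z = 0" if "z \<in> \<real>" for z
      using that assms(2) by (auto simp: f_eq elim: Reals_cases)
  qed (auto simp: zero_islimpt_Reals)
  moreover have "x(0 := x 0 / x 1 * x 1) = x"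
    using assms(1) by auto
  ultimately show ?thesis
    by (simp add: f_eq)
qed

text \<open>The hypothesis on the field is trivial over \<real> and is the identity theorem over \<complex>.\<close>

lemma exists_path_without_local_lifts:
  assumes n: "2 \<le> n"
    and real_slopes: "\<And>d (c :: 'k::real_normed_field coeffs) x. x 1 \<noteq> 0 \<Longrightarrow>
           (\<And>r::real. polyfun n d c 0 (x(0 := of_real r * x 1)) = 0) \<Longrightarrow> polyfun n d c 0 x = 0"
  shows "\<exists>\<rho> :: real \<Rightarrow> 'k bir.
           continuous_map (subtopology euclideanreal {-1..1}) (BirTop n) \<rho> \<and>
           (\<forall>\<epsilon>>0. \<epsilon> \<le> 1 \<longrightarrow> (\<forall>d\<ge>1. \<not> (\<exists>\<rho>\<epsilon> :: real \<Rightarrow> 'k coeffs set.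
              continuous_map (subtopology euclideanreal {-\<epsilon><..<\<epsilon>}) (Htop n d) \<rho>\<epsilon> \<and>
              (\<forall>t\<in>{-\<epsilon><..<\<epsilon>}. pi n d (\<rho>\<epsilon> t) = \<rho> t))))"
proof (intro exI[of _ "rho n"] conjI allI impI notI)
  show "continuous_map (subtopology euclideanreal {-1..1}) (BirTop n) (rho n :: real \<Rightarrow> 'k bir)"
    by (rule continuous_map_rho[OF n])
  fix \<epsilon> :: real and d :: nat
  assume "0 < \<epsilon>" and "\<exists>\<rho>\<epsilon> :: real \<Rightarrow> 'k coeffs set.
    continuous_map (subtopology euclideanreal {-\<epsilon><..<\<epsilon>}) (Htop n d) \<rho>\<epsilon> \<and>
    (\<forall>t\<in>{-\<epsilon><..<\<epsilon>}. pi n d (\<rho>\<epsilon> t) = rho n t)"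
  then obtain \<rho>' :: "real \<Rightarrow> 'k coeffs set"
    where cont: "continuous_map (subtopology euclideanreal {-\<epsilon><..<\<epsilon>}) (Htop n d) \<rho>'"
      and lift: "\<forall>t\<in>{-\<epsilon><..<\<epsilon>}. pi n d (\<rho>' t) = rho n t"
    by blast
  show False
  proof (rule no_continuous_lift[OF n \<open>0 < \<epsilon>\<close> real_slopes cont])
    fix t :: real
    assume "t \<in> {-\<epsilon><..<\<epsilon>}"
    then show "pi n d (\<rho>' t) = rho n t"
      using lift by blast
  qed
qed

theorem proposition1p4:
  fixes n :: nat
  assumes "n \<ge> 2"
  shows "(\<exists>\<rho> :: real \<Rightarrow> real bir.
            continuous_map (subtopology euclideanreal {-1..1}) (BirTop n) \<rho> \<and>
            (\<forall>\<epsilon>>0. \<epsilon> \<le> 1 \<longrightarrow> (\<forall>d\<ge>1. \<not> (\<exists>\<rho>\<epsilon> :: real \<Rightarrow> real coeffs set.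
               continuous_map (subtopology euclideanreal {-\<epsilon><..<\<epsilon>}) (Htop n d) \<rho>\<epsilon> \<and>
               (\<forall>t\<in>{-\<epsilon><..<\<epsilon>}. pi n d (\<rho>\<epsilon> t) = \<rho> t)))))
       \<and> (\<exists>\<rho> :: real \<Rightarrow> complex bir.
            continuous_map (subtopology euclideanreal {-1..1}) (BirTop n) \<rho> \<and>
            (\<forall>\<epsilon>>0. \<epsilon> \<le> 1 \<longrightarrow> (\<forall>d\<ge>1. \<not> (\<exists>\<rho>\<epsilon> :: real \<Rightarrow> complex coeffs set.
               continuous_map (subtopology euclideanreal {-\<epsilon><..<\<epsilon>}) (Htop n d) \<rho>\<epsilon> \<and>
               (\<forall>t\<in>{-\<epsilon><..<\<epsilon>}. pi n d (\<rho>\<epsilon> t) = \<rho> t)))))"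
  using exists_path_without_local_lifts[OF assms polyfun_real_zero_on_real_slopes]
    exists_path_without_local_lifts[OF assms polyfun_complex_zero_on_real_slopes]
  by (rule conjI)

end
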